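(* Let $(X,\{R_i\}_{i=0}^d)$ be a symmetric association scheme with adjacency matrices $A_0=I,\dots,A_d$ and intersection numbers $p_{ij}^k$, and let $W=\sum_{i=0}^dw_iA_i$ with $w_0=1$ be a complex Hadamard matrix. If $|X|\geq3$, then \[ H_3(W)=\{1\}\cup\left\{\left(\frac{w_iw_j}{w_k}\right)^{\pm1}\;\middle|\;1\leq i,j,k\leq d,\ p_{ij}^k>0\right\}. \]
   Context: An association scheme $(X,\{R_i\}_{i=0}^d)$ is a partition of $X\times X$ into relations $R_0=\{(x,x)\}$, $R_1,\dots,R_d$ such that for $(x,y)\in R_k$ the number $p_{ij}^k=|\{z\in X:(x,z)\in R_i,(z,y)\in R_j\}|$ depends only on $i,j,k$; it is symmetric if each $R_i$ is symmetric. $A_i$ is the $(0,1)$-matrix indexed by $X$ of $R_i$. A complex Hadamard matrix is a square complex matrix $H$ of order $n=|X|$ with entries of absolute value $1$ and $HH^*=nI$. For $W$ indexed by $X$, \[ H_3(W)=\left\{\frac{W_{x_1,y_1}W_{x_2,y_2}}{W_{x_2,y_1}W_{x_1,y_2}}\;\middle|\;x_1,x_2,y_1,y_2\in X,\ |\{x_1,x_2,y_1,y_2\}|=3\right\}. \] *)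

theory Defs
  imports Complex_Main
begin

definition assoc_scheme :: "'a set \<Rightarrow> nat \<Rightarrow> (nat \<Rightarrow> ('a \<times> 'a) set) \<Rightarrow> bool" where
  "assoc_scheme X d R \<longleftrightarrow>
     finite X \<and> X \<noteq> {} \<and>
     R 0 = {(x, x) | x. x \<in> X} \<and>
     (\<forall>i\<le>d. R i \<noteq> {} \<and> R i \<subseteq> X \<times> X) \<and>
     (\<forall>i\<le>d. \<forall>j\<le>d. i \<noteq> j \<longrightarrow> R i \<inter> R j = {}) \<and>
     (\<Union>i\<le>d. R i) = X \<times> X \<and>
     (\<forall>i\<le>d. \<forall>j\<le>d. \<forall>k\<le>d. \<exists>p. \<forall>(x, y) \<in> R k.
        card {z \<in> X. (x, z) \<in> R i \<and> (z, y) \<in> R j} = p)"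

definition symmetric_assoc_scheme :: "'a set \<Rightarrow> nat \<Rightarrow> (nat \<Rightarrow> ('a \<times> 'a) set) \<Rightarrow> bool" where
  "symmetric_assoc_scheme X d R \<longleftrightarrow>
     assoc_scheme X d R \<and> (\<forall>i\<le>d. \<forall>(x, y) \<in> R i. (y, x) \<in> R i)"

definition inter_num :: "'a set \<Rightarrow> (nat \<Rightarrow> ('a \<times> 'a) set) \<Rightarrow> nat \<Rightarrow> nat \<Rightarrow> nat \<Rightarrow> nat" where
  "inter_num X R i j k =
     (let (x, y) = (SOME xy. xy \<in> R k) in card {z \<in> X. (x, z) \<in> R i \<and> (z, y) \<in> R j})"

definition adj :: "(nat \<Rightarrow> ('a \<times> 'a) set) \<Rightarrow> nat \<Rightarrow> 'a \<Rightarrow> 'a \<Rightarrow> complex" where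
  "adj R i x y = (if (x, y) \<in> R i then 1 else 0)"

definition complex_hadamard :: "'a set \<Rightarrow> ('a \<Rightarrow> 'a \<Rightarrow> complex) \<Rightarrow> bool" where
  "complex_hadamard X H \<longleftrightarrow>
     (\<forall>x\<in>X. \<forall>y\<in>X. cmod (H x y) = 1) \<and>
     (\<forall>x\<in>X. \<forall>y\<in>X. (\<Sum>z\<in>X. H x z * cnj (H y z)) = (if x = y then of_nat (card X) else 0))"

definition H3 :: "'a set \<Rightarrow> ('a \<Rightarrow> 'a \<Rightarrow> complex) \<Rightarrow> complex set" where
  "H3 X W = {W x1 y1 * W x2 y2 / (W x2 y1 * W x1 y2) | x1 x2 y1 y2.
      x1 \<in> X \<and> x2 \<in> X \<and> y1 \<in> X \<and> y2 \<in> X \<and> card {x1, x2, y1, y2} = 3}"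

end

theory Submission
  imports Defs
begin

text \<open>Only three distinct points occur in an element of H3, and the diagonal of W is 1;
  hence every such element is a triangle ratio W(a,b) W(b,e) / W(a,e) over three distinct
  points, or its inverse, or 1. In W every entry on a pair of class R i equals w i, so a
  triangle ratio is w i w j / w k where the triangle witnesses p_ij^k > 0, and conversely
  p_ij^k > 0 provides such a triangle.\<close>

definition triangle_ratios :: "'a set \<Rightarrow> ('a \<Rightarrow> 'a \<Rightarrow> complex) \<Rightarrow> complex set" where
  "triangle_ratios X W = {W a b * W b e / W a e | a b e.
      a \<in> X \<and> b \<in> X \<and> e \<in> X \<and> distinct [a, b, e]}"

lemma card_four_eq_three_cases:
  assumes "card {x1, x2, y1, y2} = 3"
  obtains "x1 = x2" | "y1 = y2"
    | "x1 = y1" "distinct [x2, x1, y2]" | "x1 = y2" "distinct [x2, x1, y1]"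
    | "x2 = y1" "distinct [x1, x2, y2]" | "x2 = y2" "distinct [x1, x2, y1]"
  using assms by (auto simp: card_insert_if split: if_splits)

lemma H3_subset_triangle_ratios:
  assumes diag: "\<And>x. x \<in> X \<Longrightarrow> W x x = 1"
    and nz: "\<And>x y. x \<in> X \<Longrightarrow> y \<in> X \<Longrightarrow> W x y \<noteq> 0"
  shows "H3 X W \<subseteq> {1} \<union> triangle_ratios X W \<union> inverse ` triangle_ratios X W"
proof
  fix c assume "c \<in> H3 X W"
  then obtain x1 x2 y1 y2 where X: "x1 \<in> X" "x2 \<in> X" "y1 \<in> X" "y2 \<in> X"
    and card: "card {x1, x2, y1, y2} = 3"
    and c: "c = W x1 y1 * W x2 y2 / (W x2 y1 * W x1 y2)"
    unfolding H3_def by blast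
  note nz' = nz[OF X(1) X(3)] nz[OF X(1) X(4)] nz[OF X(2) X(3)] nz[OF X(2) X(4)]
  have ratio: "W a b * W b e / W a e \<in> triangle_ratios X W"
    if "a \<in> X" "b \<in> X" "e \<in> X" "distinct [a, b, e]" for a b e
    using that unfolding triangle_ratios_def by blast
  from card show "c \<in> {1} \<union> triangle_ratios X W \<union> inverse ` triangle_ratios X W"
  proof (cases rule: card_four_eq_three_cases)
    case 1 then show ?thesis using c nz' by simp
  next
    case 2 then show ?thesis using c nz' by simp
  next
    case 3
    have "c = inverse (W x2 x1 * W x1 y2 / W x2 y2)" using c 3 diag X by simp
    then show ?thesis using ratio[OF X(2,1,4) 3(2)] by blast
  next
    case 4
    have "c = W x2 x1 * W x1 y1 / W x2 y1" using c 4 diag X by (simp add: mult.commute)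
    then show ?thesis using ratio[OF X(2,1,3) 4(2)] by blast
  next
    case 5
    have "c = W x1 x2 * W x2 y2 / W x1 y2" using c 5 diag X by simp
    then show ?thesis using ratio[OF X(1,2,4) 5(2)] by blast
  next
    case 6
    have "c = inverse (W x1 x2 * W x2 y1 / W x1 y1)" using c 6 diag X by (simp add: mult.commute)
    then show ?thesis using ratio[OF X(1,2,3) 6(2)] by blast
  qed
qed

lemma triangle_ratios_subset_H3:
  assumes diag: "\<And>x. x \<in> X \<Longrightarrow> W x x = 1"
  shows "triangle_ratios X W \<union> inverse ` triangle_ratios X W \<subseteq> H3 X W"
proof -
  have "W a b * W b e / W a e \<in> H3 X W" "inverse (W a b * W b e / W a e) \<in> H3 X W"
    if X: "a \<in> X" "b \<in> X" "e \<in> X" and "distinct [a, b, e]" for a b e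
  proof -
    have "card {a, b, b, e} = 3" "card {b, a, b, e} = 3"
      using \<open>distinct [a, b, e]\<close> by (simp_all add: insert_commute)
    moreover have "W a b * W b e / W a e = W a b * W b e / (W b b * W a e)"
      "inverse (W a b * W b e / W a e) = W b b * W a e / (W a b * W b e)"
      using diag[OF X(2)] by simp_all
    ultimately show "W a b * W b e / W a e \<in> H3 X W" "inverse (W a b * W b e / W a e) \<in> H3 X W"
      using X unfolding H3_def by blast+
  qed
  then show ?thesis unfolding triangle_ratios_def by blast
qed

lemma one_in_H3:
  assumes nz: "\<And>x y. x \<in> X \<Longrightarrow> y \<in> X \<Longrightarrow> W x y \<noteq> 0" and "card X \<ge> 3"
  shows "1 \<in> H3 X W"
proof -
  obtain T where "T \<subseteq> X" "card T = 3" using obtain_subset_with_card_n[OF \<open>card X \<ge> 3\<close>] by blast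
  then obtain a b e where X: "a \<in> X" "b \<in> X" "e \<in> X" and "card {a, a, b, e} = 3"
    unfolding card_3_iff by (metis insert_absorb2 insert_subset)
  moreover have "1 = W a b * W a e / (W a b * W a e)" using nz X by simp
  ultimately show ?thesis unfolding H3_def by blast
qed

lemma H3_eq_triangle_ratios:
  assumes "\<And>x. x \<in> X \<Longrightarrow> W x x = 1"
    and "\<And>x y. x \<in> X \<Longrightarrow> y \<in> X \<Longrightarrow> W x y \<noteq> 0"
    and "card X \<ge> 3"
  shows "H3 X W = {1} \<union> triangle_ratios X W \<union> inverse ` triangle_ratios X W"
  using H3_subset_triangle_ratios[of X W] triangle_ratios_subset_H3[of X W]
    one_in_H3[of X W] assms by blast

lemma assoc_scheme_pair_in_class:
  assumes "assoc_scheme X d R" "x \<in> X" "y \<in> X"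
  obtains i where "i \<le> d" "(x, y) \<in> R i"
proof -
  have "(\<Union>i\<le>d. R i) = X \<times> X" using assms(1) unfolding assoc_scheme_def by blast
  then show ?thesis using assms(2,3) that by blast
qed

lemma assoc_scheme_class_subset:
  assumes "assoc_scheme X d R" "i \<le> d" "(x, y) \<in> R i"
  shows "x \<in> X" "y \<in> X"
  using assms unfolding assoc_scheme_def by blast+

lemma assoc_scheme_class_diagonal_iff:
  assumes "assoc_scheme X d R" "i \<le> d" "(x, y) \<in> R i"
  shows "x = y \<longleftrightarrow> i = 0"
proof -
  have R0: "R 0 = {(x, x) | x. x \<in> X}"
    and disj: "\<forall>i\<le>d. \<forall>j\<le>d. i \<noteq> j \<longrightarrow> R i \<inter> R j = {}"
    using assms(1) unfolding assoc_scheme_def by blast+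
  show ?thesis
    using R0 disj[rule_format, of 0 i] assms(2,3) assoc_scheme_class_subset[OF assms] by blast
qed

lemma weighted_adj_sum_eq:
  assumes "assoc_scheme X d R" "i \<le> d" "(x, y) \<in> R i"
  shows "(\<Sum>j\<le>d. w j * adj R j x y) = w i"
proof -
  have "\<forall>i\<le>d. \<forall>j\<le>d. i \<noteq> j \<longrightarrow> R i \<inter> R j = {}"
    using assms(1) unfolding assoc_scheme_def by blast
  then have "w j * adj R j x y = (if j = i then w j else 0)" if "j \<le> d" for j
    using assms(2,3) that unfolding adj_def by auto
  then have "(\<Sum>j\<le>d. w j * adj R j x y) = (\<Sum>j\<le>d. if j = i then w j else 0)"
    by (intro sum.cong) auto
  then show ?thesis using assms(2) by simp
qed

lemma inter_num_eq:
  assumes "assoc_scheme X d R" "i \<le> d" "j \<le> d" "k \<le> d" "(x, y) \<in> R k"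
  shows "inter_num X R i j k = card {z \<in> X. (x, z) \<in> R i \<and> (z, y) \<in> R j}"
proof -
  have "\<exists>p. \<forall>(x, y) \<in> R k. card {z \<in> X. (x, z) \<in> R i \<and> (z, y) \<in> R j} = p"
    using assms(1-4) unfolding assoc_scheme_def by blast
  then obtain p where p: "\<forall>(x, y) \<in> R k. card {z \<in> X. (x, z) \<in> R i \<and> (z, y) \<in> R j} = p" ..
  obtain a b where ab: "(SOME xy. xy \<in> R k) = (a, b)" by (metis surj_pair)
  have "(a, b) \<in> R k" using someI[of "\<lambda>xy. xy \<in> R k", OF assms(5)] ab by simp
  then have "inter_num X R i j k = p"
    using p ab unfolding inter_num_def by auto
  also have "p = card {z \<in> X. (x, z) \<in> R i \<and> (z, y) \<in> R j}"
    using p assms(5) by auto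
  finally show ?thesis .
qed

lemma inter_num_pos_iff:
  assumes "assoc_scheme X d R" "i \<le> d" "j \<le> d" "k \<le> d" "(x, y) \<in> R k"
  shows "0 < inter_num X R i j k \<longleftrightarrow> (\<exists>z \<in> X. (x, z) \<in> R i \<and> (z, y) \<in> R j)"
proof -
  have "finite X" using assms(1) unfolding assoc_scheme_def by blast
  then show ?thesis using inter_num_eq[OF assms] by (auto simp: card_gt_0_iff)
qed

lemma triangle_ratios_assoc_scheme:
  assumes S: "assoc_scheme X d R" and W: "W = (\<lambda>x y. \<Sum>i\<le>d. w i * adj R i x y)"
  shows "triangle_ratios X W = {w i * w j / w k | i j k.
     1 \<le> i \<and> i \<le> d \<and> 1 \<le> j \<and> j \<le> d \<and> 1 \<le> k \<and> k \<le> d \<and> 0 < inter_num X R i j k}"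
    (is "_ = ?T")
proof (intro equalityI subsetI)
  fix c assume "c \<in> triangle_ratios X W"
  then obtain a b e where X: "a \<in> X" "b \<in> X" "e \<in> X" and dist: "distinct [a, b, e]"
    and c: "c = W a b * W b e / W a e"
    unfolding triangle_ratios_def by blast
  obtain i where i: "i \<le> d" "(a, b) \<in> R i" using assoc_scheme_pair_in_class[OF S X(1,2)] .
  obtain j where j: "j \<le> d" "(b, e) \<in> R j" using assoc_scheme_pair_in_class[OF S X(2,3)] .
  obtain k where k: "k \<le> d" "(a, e) \<in> R k" using assoc_scheme_pair_in_class[OF S X(1,3)] .
  have "1 \<le> i" "1 \<le> j" "1 \<le> k"
    using assoc_scheme_class_diagonal_iff[OF S] i j k dist by fastforce+
  moreover have "0 < inter_num X R i j k"
    using inter_num_pos_iff[OF S i(1) j(1) k] X(2) i(2) j(2) by blast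
  moreover have "c = w i * w j / w k"
    using c W weighted_adj_sum_eq[OF S] i j k by simp
  ultimately show "c \<in> ?T" using i j k by blast
next
  fix c assume "c \<in> ?T"
  then obtain i j k where ijk: "1 \<le> i" "i \<le> d" "1 \<le> j" "j \<le> d" "1 \<le> k" "k \<le> d"
    and p: "0 < inter_num X R i j k" and c: "c = w i * w j / w k" by blast
  have "R k \<noteq> {}" using S ijk(6) unfolding assoc_scheme_def by blast
  then obtain x y where xy: "(x, y) \<in> R k" by auto
  obtain z where z: "z \<in> X" "(x, z) \<in> R i" "(z, y) \<in> R j"
    using inter_num_pos_iff[OF S ijk(2,4,6) xy] p by blast
  have "distinct [x, z, y]"
    using assoc_scheme_class_diagonal_iff[OF S] ijk z xy by fastforce
  moreover have "c = W x z * W z y / W x y"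
    using c W weighted_adj_sum_eq[OF S] ijk z xy by simp
  ultimately show "c \<in> triangle_ratios X W"
    using z(1) assoc_scheme_class_subset[OF S ijk(6) xy] unfolding triangle_ratios_def by blast
qed

theorem lemma5p1:
  fixes X :: "'a set" and d :: nat and R :: "nat \<Rightarrow> ('a \<times> 'a) set"
    and w :: "nat \<Rightarrow> complex" and W :: "'a \<Rightarrow> 'a \<Rightarrow> complex"
  assumes "symmetric_assoc_scheme X d R"
    and "W = (\<lambda>x y. \<Sum>i\<le>d. w i * adj R i x y)"
    and "w 0 = 1"
    and "complex_hadamard X W"
    and "card X \<ge> 3"
  shows "H3 X W = {1} \<union>
     {c | c i j k. 1 \<le> i \<and> i \<le> d \<and> 1 \<le> j \<and> j \<le> d \<and> 1 \<le> k \<and> k \<le> d \<and>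
        inter_num X R i j k > 0 \<and>
        (c = w i * w j / w k \<or> c = inverse (w i * w j / w k))}"
proof -
  have S: "assoc_scheme X d R" using assms(1) unfolding symmetric_assoc_scheme_def by blast
  have diag: "W x x = 1" if "x \<in> X" for x
  proof -
    have "(x, x) \<in> R 0" using S that unfolding assoc_scheme_def by blast
    from weighted_adj_sum_eq[OF S le0 this] show ?thesis using assms(2,3) by simp
  qed
  have nz: "W x y \<noteq> 0" if "x \<in> X" "y \<in> X" for x y
    using assms(4) that unfolding complex_hadamard_def by fastforce
  have "H3 X W = {1} \<union> triangle_ratios X W \<union> inverse ` triangle_ratios X W"
    using diag nz assms(5) by (rule H3_eq_triangle_ratios)
  then show ?thesis
    unfolding triangle_ratios_assoc_scheme[OF S assms(2)] by blast
qed

end
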